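(* Let $\pi$ be a matching of size $n$. For every integer $p$ with $1\le p\le n-1$ we have $m^{(A)}_p(\pi)=m^{(B)}_p(\pi)$.
   Context: A matching of size $n$ is a set of $n$ disjoint pairs (arches) partitioning $\{1,\dots,2n\}$ which is noncrossing: there are no two arches $\{i<j\}$, $\{k<l\}$ with $i<k<j<l$. Encode $\pi$ by the increasing sequence $a_1<\dots<a_n$ of the smaller elements of its arches (positions of opening parentheses); one has $a_i\le 2i-1$. The Young diagram $Y(\pi)$ is the diagram whose rows, from top to bottom, have lengths $a_n-n\ge a_{n-1}-(n-1)\ge\dots\ge a_1-1$ (row number $n+1-i$ from the top has length $a_i-i$). A box in the $x$-th row from the top and $y$-th column from the left is written $(x,y)$. Rule A: write $\widehat{x}=2n+1-x$. For $1\le p\le n-1$, let $\mathcal{A}^L_p(\pi)$ be the set of arches $\{a_1<a_2\}$ of $\pi$ with $a_1\le p$ and $p<a_2<\widehat p$, and $\mathcal{A}^R_p(\pi)$ the set of arches $\{a_1<a_2\}$ with $p<a_1<\widehat p$ and $\widehat p\le a_2$. Then $|\mathcal{A}^L_p(\pi)|+|\mathcal{A}^R_p(\pi)|$ is even and $m^{(A)}_p(\pi):=\tfrac12(|\mathcal{A}^L_p(\pi)|+|\mathcal{A}^R_p(\pi)|)$. Rule B: label the box $(x,y)$ of $Y(\pi)$ by $n+1-x-y$. The rim of a nonempty Young diagram is the set of its boxes $(x,y)$ such that $(x+1,y+1)$ is not in the diagram; removing the rim leaves a Young diagram, and iterating gives the rim decomposition $R_1,\dots,R_s$ of $Y(\pi)$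 (each $R_\ell$ is the rim of the diagram remaining after removing $R_1,\dots,R_{\ell-1}$). For a rim $R_\ell$, let $i$ be the label of its bottom-left box (the box of $R_\ell$ in its leftmost column), $j$ the label of its top-right box (the box of $R_\ell$ in its topmost row), and $k$ the minimal label in $R_\ell$. Let $B_\ell$ be the multiset $\{k\}\cup\{i,i-1,\dots,k+1\}\cup\{j,j-1,\dots,k+1\}$, and $B_\pi$ the multiset union of all $B_\ell$. Then $m^{(B)}_p(\pi)$ is the multiplicity of $p$ in $B_\pi$. *)

theory Defs
  imports Main "HOL-Library.Multiset"
begin

definition noncrossing_matching :: "nat \<Rightarrow> (nat \<times> nat) set \<Rightarrow> bool" where
  "noncrossing_matching n M \<longleftrightarrow>
     (\<forall>(i,j)\<in>M. i < j \<and> 1 \<le> i \<and> j \<le> 2*n) \<and>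
     (\<forall>x\<in>{1..2*n}. \<exists>!a. a \<in> M \<and> (fst a = x \<or> snd a = x)) \<and>
     (\<forall>(i,j)\<in>M. \<forall>(k,l)\<in>M. \<not> (i < k \<and> k < j \<and> j < l))"

definition hat :: "nat \<Rightarrow> nat \<Rightarrow> nat" where
  "hat n x = 2*n + 1 - x"

definition arcsL :: "nat \<Rightarrow> (nat \<times> nat) set \<Rightarrow> nat \<Rightarrow> (nat \<times> nat) set" where
  "arcsL n M p = {(a1,a2)\<in>M. a1 \<le> p \<and> p < a2 \<and> a2 < hat n p}"

definition arcsR :: "nat \<Rightarrow> (nat \<times> nat) set \<Rightarrow> nat \<Rightarrow> (nat \<times> nat) set" where
  "arcsR n M p = {(a1,a2)\<in>M. p < a1 \<and> a1 < hat n p \<and> hat n p \<le> a2}"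

definition mA :: "nat \<Rightarrow> (nat \<times> nat) set \<Rightarrow> nat \<Rightarrow> nat" where
  "mA n M p = (card (arcsL n M p) + card (arcsR n M p)) div 2"

text \<open>a i = i-th smallest opening position (1-based).\<close>
definition opener :: "(nat \<times> nat) set \<Rightarrow> nat \<Rightarrow> nat" where
  "opener M i = sorted_list_of_set (fst ` M) ! (i - 1)"

text \<open>Young diagram: row x (from top, 1..n) has length a_(n+1-x) - (n+1-x);
  boxes (x,y) = (row, column), 1-based.\<close>
definition young :: "nat \<Rightarrow> (nat \<times> nat) set \<Rightarrow> (nat \<times> nat) set" where
  "young n M = {(x,y). 1 \<le> x \<and> x \<le> n \<and> 1 \<le> y \<and>
                       y \<le> opener M (n + 1 - x) - (n + 1 - x)}"

definition label :: "nat \<Rightarrow> nat \<times> nat \<Rightarrow> int" where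
  "label n b = int n + 1 - int (fst b) - int (snd b)"

definition rim :: "(nat \<times> nat) set \<Rightarrow> (nat \<times> nat) set" where
  "rim D = {(x,y)\<in>D. (x+1, y+1) \<notin> D}"

definition remaining :: "(nat \<times> nat) set \<Rightarrow> nat \<Rightarrow> (nat \<times> nat) set" where
  "remaining D l = ((\<lambda>E. E - rim E) ^^ l) D"

definition bottom_left :: "(nat \<times> nat) set \<Rightarrow> nat \<times> nat" where
  "bottom_left R = (let c = Min (snd ` R) in (Max {x. (x,c) \<in> R}, c))"

definition top_right :: "(nat \<times> nat) set \<Rightarrow> nat \<times> nat" where
  "top_right R = (let r = Min (fst ` R) in (r, Max {y. (r,y) \<in> R}))"

definition B_rim :: "nat \<Rightarrow> (nat \<times> nat) set \<Rightarrow> int multiset" where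
  "B_rim n R = (let i = label n (bottom_left R); j = label n (top_right R);
                    k = Min (label n ` R)
                in {#k#} + mset_set {k+1..i} + mset_set {k+1..j})"

text \<open>Multiset union over the rim decomposition R_1,...,R_s; there are at most
  card (young n M) nonempty rims.\<close>
definition B_pi :: "nat \<Rightarrow> (nat \<times> nat) set \<Rightarrow> int multiset" where
  "B_pi n M = (\<Sum>l < card (young n M).
       if remaining (young n M) l = {} then {#}
       else B_rim n (rim (remaining (young n M) l)))"

definition mB :: "nat \<Rightarrow> (nat \<times> nat) set \<Rightarrow> nat \<Rightarrow> nat" where
  "mB n M p = count (B_pi n M) (int p)"

end

theory Submission
  imports Defs
begin

(* Read the Young diagram Y(pi) inside the staircase of size n through its height
   profile  h(d) = n - |d| - 2 * (number of boxes on the diagonal of content d);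
   for the diagram of a matching, h(t - n) is the number of arches passing over
   position t, i.e. the height of the Dyck path of pi after t steps.  For q >= 1 let
   the excess of a profile be  h(-q) + h(q) - 2 * min_{[-q,q]} h.

   Rule A: the arches over p and over 2n-p are those of A^L_p resp. A^R_p together
   with the arches enclosing the window [p+1, 2n-p], and the minimum of the Dyck
   path on the window is exactly the number of enclosing arches (noncrossingness).
   Hence |A^L_p| + |A^R_p| is the excess of h at q = n - p.

   Rule B: peeling off the outer rim raises h by 2 on the contents the rim meets and
   leaves it unchanged elsewhere; a case analysis on the position of the rim relative
   to the window shows that the multiplicity of n - q in the multiset of that rim is
   half of the drop in excess.  Summing over the rim decomposition, and using that
   the empty diagram has excess 0, twice the multiplicity of p in B_pi is the same
   excess, which proves the theorem. *)

section \<open>Young diagrams, their diagonals and their rims\<close>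

definition young_diagram :: "(nat \<times> nat) set \<Rightarrow> bool" where
  "young_diagram D \<longleftrightarrow> finite D \<and> (\<forall>x y. (x,y) \<in> D \<longrightarrow> 1 \<le> x \<and> 1 \<le> y) \<and>
     (\<forall>x y x' y'. (x,y) \<in> D \<longrightarrow> 1 \<le> x' \<longrightarrow> x' \<le> x \<longrightarrow> 1 \<le> y' \<longrightarrow> y' \<le> y \<longrightarrow> (x',y') \<in> D)"

lemma young_diagramI:
  assumes "finite D" and "\<And>x y. (x,y) \<in> D \<Longrightarrow> 1 \<le> x \<and> 1 \<le> y"
    and "\<And>x y x' y'. (x,y) \<in> D \<Longrightarrow> 1 \<le> x' \<Longrightarrow> x' \<le> x \<Longrightarrow> 1 \<le> y' \<Longrightarrow> y' \<le> y \<Longrightarrow> (x',y') \<in> D"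
  shows "young_diagram D"
  using assms unfolding young_diagram_def by blast

lemma young_diagram_finite: "young_diagram D \<Longrightarrow> finite D"
  unfolding young_diagram_def by blast

lemma young_diagram_pos: "young_diagram D \<Longrightarrow> (x,y) \<in> D \<Longrightarrow> 1 \<le> x \<and> 1 \<le> y"
  unfolding young_diagram_def by blast

lemma young_diagram_down:
  "young_diagram D \<Longrightarrow> (x,y) \<in> D \<Longrightarrow> 1 \<le> x' \<Longrightarrow> x' \<le> x \<Longrightarrow> 1 \<le> y' \<Longrightarrow> y' \<le> y \<Longrightarrow> (x',y') \<in> D"
  unfolding young_diagram_def by blast

lemma mem_rim: "(x,y) \<in> rim D \<longleftrightarrow> (x,y) \<in> D \<and> (x+1,y+1) \<notin> D"
  by (simp add: rim_def)

lemma mem_peeled: "(x,y) \<in> D - rim D \<longleftrightarrow> (x,y) \<in> D \<and> (x+1,y+1) \<in> D"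
  by (auto simp add: rim_def)

lemma young_diagram_peel:
  assumes "young_diagram D" shows "young_diagram (D - rim D)"
proof (rule young_diagramI)
  show "finite (D - rim D)" using young_diagram_finite[OF assms] by simp
  show "\<And>x y. (x,y) \<in> D - rim D \<Longrightarrow> 1 \<le> x \<and> 1 \<le> y" using young_diagram_pos[OF assms] by blast
  fix x y x' y' assume h: "(x,y) \<in> D - rim D" "1 \<le> x'" "x' \<le> x" "1 \<le> y'" "y' \<le> y"
  then have "(x+1,y+1) \<in> D" "(x,y) \<in> D" using mem_peeled by blast+
  then have "(x'+1,y'+1) \<in> D" "(x',y') \<in> D" using young_diagram_down[OF assms] h by auto
  then show "(x',y') \<in> D - rim D" using mem_peeled by blast
qed

definition diagonal :: "(nat \<times> nat) set \<Rightarrow> int \<Rightarrow> (nat \<times> nat) set" where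
  "diagonal D d = {b\<in>D. int (snd b) - int (fst b) = d}"

definition diag_size :: "(nat \<times> nat) set \<Rightarrow> int \<Rightarrow> nat" where
  "diag_size D d = card (diagonal D d)"

definition diag_corner :: "int \<Rightarrow> nat \<times> nat" where
  "diag_corner d = (if d \<ge> 0 then (1, nat d + 1) else (nat (-d) + 1, 1))"

lemma finite_diagonal: "young_diagram D \<Longrightarrow> finite (diagonal D d)"
  using young_diagram_finite by (simp add: diagonal_def)

lemma diagonal_nonempty_iff:
  assumes "young_diagram D" shows "diagonal D d \<noteq> {} \<longleftrightarrow> diag_corner d \<in> D"
proof
  assume "diagonal D d \<noteq> {}"
  then obtain x y where b: "(x,y) \<in> D" "int y - int x = d" by (auto simp: diagonal_def)
  have "1 \<le> x" "1 \<le> y" using young_diagram_pos[OF assms b(1)] by auto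
  then show "diag_corner d \<in> D"
    using young_diagram_down[OF assms b(1)] b(2) by (auto simp: diag_corner_def)
next
  assume "diag_corner d \<in> D"
  moreover have "int (snd (diag_corner d)) - int (fst (diag_corner d)) = d"
    by (simp add: diag_corner_def)
  ultimately show "diagonal D d \<noteq> {}" unfolding diagonal_def by blast
qed

lemma diag_size_eq_0: "young_diagram D \<Longrightarrow> diag_corner d \<notin> D \<Longrightarrow> diag_size D d = 0"
  using diagonal_nonempty_iff[of D d] by (simp add: diag_size_def)

lemma diag_size_pos: "young_diagram D \<Longrightarrow> diag_corner d \<in> D \<Longrightarrow> 1 \<le> diag_size D d"
  using diagonal_nonempty_iff finite_diagonal
  by (simp add: diag_size_def Suc_le_eq card_gt_0_iff)

lemma diagonal_border:
  assumes "young_diagram D"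
  shows "{b\<in>diagonal D d. fst b = 1 \<or> snd b = 1} = (if diag_corner d \<in> D then {diag_corner d} else {})"
    (is "?border = _")
proof -
  have "?border \<subseteq> {diag_corner d}"
  proof
    fix b assume "b \<in> ?border"
    then obtain x y where b: "b = (x,y)" "(x,y) \<in> D" "int y - int x = d" "x = 1 \<or> y = 1"
      unfolding diagonal_def by (cases b) auto
    have "1 \<le> x" "1 \<le> y" using young_diagram_pos[OF assms b(2)] by auto
    then show "b \<in> {diag_corner d}" using b unfolding diag_corner_def by auto
  qed
  moreover have "?border \<subseteq> D" by (auto simp: diagonal_def)
  moreover have "diag_corner d \<in> D \<Longrightarrow> diag_corner d \<in> ?border"
    by (auto simp: diagonal_def diag_corner_def)
  ultimately have "?border \<subseteq> {diag_corner d} \<inter> D" "diag_corner d \<in> D \<Longrightarrow> ?border = {diag_corner d}"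
    by blast+
  then show ?thesis by (cases "diag_corner d \<in> D") auto
qed

lemma diagonal_inner:
  assumes "young_diagram D"
  shows "{b\<in>diagonal D d. 2 \<le> fst b \<and> 2 \<le> snd b} = (\<lambda>(x,y). (x+1,y+1)) ` diagonal (D - rim D) d"
proof
  show "{b\<in>diagonal D d. 2 \<le> fst b \<and> 2 \<le> snd b} \<subseteq> (\<lambda>(x,y). (x+1,y+1)) ` diagonal (D - rim D) d"
  proof
    fix b assume "b \<in> {b\<in>diagonal D d. 2 \<le> fst b \<and> 2 \<le> snd b}"
    then obtain x y where b: "b = (x,y)" "(x,y) \<in> D" "int y - int x = d" "2 \<le> x" "2 \<le> y"
      unfolding diagonal_def by (cases b) auto
    have "(x-1,y-1) \<in> D" using b young_diagram_down[OF assms b(2)] by auto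
    then have "(x-1,y-1) \<in> diagonal (D - rim D) d"
      using b mem_peeled[of "x-1" "y-1" D] by (simp add: diagonal_def)
    moreover have "b = (\<lambda>(x,y). (x+1,y+1)) (x-1,y-1)" using b by auto
    ultimately show "b \<in> (\<lambda>(x,y). (x+1,y+1)) ` diagonal (D - rim D) d" by blast
  qed
  show "(\<lambda>(x,y). (x+1,y+1)) ` diagonal (D - rim D) d \<subseteq> {b\<in>diagonal D d. 2 \<le> fst b \<and> 2 \<le> snd b}"
    using young_diagram_pos[OF assms] by (auto simp: diagonal_def rim_def)
qed

lemma diag_size_peel:
  assumes "young_diagram D"
  shows "diag_size D d = diag_size (D - rim D) d + (if diag_corner d \<in> D then 1 else 0)"
proof -
  define inner where "inner = {b\<in>diagonal D d. 2 \<le> fst b \<and> 2 \<le> snd b}"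
  define border where "border = {b\<in>diagonal D d. fst b = 1 \<or> snd b = 1}"
  have "diagonal D d = inner \<union> border" "inner \<inter> border = {}"
    using young_diagram_pos[OF assms] by (force simp: inner_def border_def diagonal_def)+
  then have "diag_size D d = card inner + card border"
    unfolding diag_size_def using finite_diagonal[OF assms] by (metis card_Un_disjoint finite_Un)
  moreover have "inj_on (\<lambda>(x::nat,y::nat). (x+1,y+1)) (diagonal (D - rim D) d)"
    by (auto simp: inj_on_def)
  then have "card inner = diag_size (D - rim D) d"
    unfolding inner_def diagonal_inner[OF assms] by (simp add: card_image diag_size_def)
  ultimately show ?thesis unfolding border_def diagonal_border[OF assms] by simp
qed

text \<open>A rim box \<open>(x,y)\<close> is the last box of its diagonal, which therefore has
  \<open>min x y\<close> boxes.\<close>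
lemma diag_size_at_rim:
  assumes D: "young_diagram D" and r: "(x,y) \<in> rim D"
  shows "diag_size D (int y - int x) = min x y"
proof -
  have xy: "(x,y) \<in> D" "(x+1,y+1) \<notin> D" using r mem_rim by blast+
  have p: "1 \<le> x" "1 \<le> y" using young_diagram_pos[OF D xy(1)] by auto
  have "diagonal D (int y - int x) = (\<lambda>j. (x-j, y-j)) ` {..<min x y}"
  proof
    show "diagonal D (int y - int x) \<subseteq> (\<lambda>j. (x-j, y-j)) ` {..<min x y}"
    proof
      fix b assume "b \<in> diagonal D (int y - int x)"
      then obtain x' y' where b: "b = (x',y')" "(x',y') \<in> D" "int y' - int x' = int y - int x"
        unfolding diagonal_def by (cases b) auto
      have "1 \<le> x'" "1 \<le> y'" using young_diagram_pos[OF D b(2)] by auto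
      moreover have "x' \<le> x"
      proof (rule ccontr)
        assume "\<not> x' \<le> x"
        then have "(x+1,y+1) \<in> D" using young_diagram_down[OF D b(2), of "x+1" "y+1"] b(3) by auto
        then show False using xy by blast
      qed
      ultimately have "b = (x - (x-x'), y - (x-x'))" "x - x' < min x y" using b p by auto
      then show "b \<in> (\<lambda>j. (x-j, y-j)) ` {..<min x y}" by blast
    qed
    show "(\<lambda>j. (x-j, y-j)) ` {..<min x y} \<subseteq> diagonal D (int y - int x)"
    proof
      fix b assume "b \<in> (\<lambda>j. (x-j, y-j)) ` {..<min x y}"
      then obtain j where j: "j < min x y" "b = (x-j,y-j)" by blast
      have "(x-j,y-j) \<in> D" using young_diagram_down[OF D xy(1), of "x-j" "y-j"] j by auto
      then show "b \<in> diagonal D (int y - int x)" using j by (auto simp: diagonal_def)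
    qed
  qed
  moreover have "inj_on (\<lambda>j. (x-j, y-j)) {..<min x y}" by (auto simp: inj_on_def)
  ultimately show ?thesis unfolding diag_size_def by (simp add: card_image)
qed

text \<open>For the diagram of a matching
  it is the height of the associated Dyck path after \<open>n + d\<close> steps.\<close>
definition height :: "nat \<Rightarrow> (nat \<times> nat) set \<Rightarrow> int \<Rightarrow> int" where
  "height n D d = int n - \<bar>d\<bar> - 2 * int (diag_size D d)"

lemma label_at_rim:
  assumes "young_diagram D" "(x,y) \<in> rim D"
  shows "label n (x,y) = height n D (int y - int x) + 1"
  using diag_size_at_rim[OF assms] by (simp add: label_def height_def min_def)

text \<open>The lengths of the first column and of the first row; the rim runs from the
  bottom of the former to the end of the latter.\<close>
definition first_col_len :: "(nat \<times> nat) set \<Rightarrow> nat" where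
  "first_col_len D = Max {x. (x,1) \<in> D}"

definition first_row_len :: "(nat \<times> nat) set \<Rightarrow> nat" where
  "first_row_len D = Max {y. (1,y) \<in> D}"

lemma young_diagram_corner:
  assumes "young_diagram D" "D \<noteq> {}" shows "(1,1) \<in> D"
proof -
  obtain x y where xy: "(x,y) \<in> D" using assms(2) by auto
  then show ?thesis using young_diagram_down[OF assms(1) xy, of 1 1] young_diagram_pos[OF assms(1) xy] by auto
qed

lemma first_col_len:
  assumes D: "young_diagram D" and ne: "D \<noteq> {}"
  shows "1 \<le> first_col_len D" and "(x,1) \<in> D \<longleftrightarrow> 1 \<le> x \<and> x \<le> first_col_len D"
proof -
  have "{x. (x,1) \<in> D} \<subseteq> fst ` D" by force
  then have fin: "finite {x. (x,1) \<in> D}"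
    using finite_subset young_diagram_finite[OF D] by blast
  have one: "1 \<in> {x. (x,1) \<in> D}" using young_diagram_corner[OF D ne] by simp
  have last: "(first_col_len D, 1) \<in> D"
    using Max_in[OF fin] one unfolding first_col_len_def by blast
  show "1 \<le> first_col_len D" using Max_ge[OF fin one] unfolding first_col_len_def by simp
  show "(x,1) \<in> D \<longleftrightarrow> 1 \<le> x \<and> x \<le> first_col_len D"
  proof
    assume "(x,1) \<in> D" then show "1 \<le> x \<and> x \<le> first_col_len D"
      using Max_ge[OF fin] young_diagram_pos[OF D] unfolding first_col_len_def by auto
  next
    assume "1 \<le> x \<and> x \<le> first_col_len D" then show "(x,1) \<in> D"
      using young_diagram_down[OF D last, of x 1] by auto
  qed
qed

lemma first_row_len:
  assumes D: "young_diagram D" and ne: "D \<noteq> {}"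
  shows "1 \<le> first_row_len D" and "(1,y) \<in> D \<longleftrightarrow> 1 \<le> y \<and> y \<le> first_row_len D"
proof -
  have "{y. (1,y) \<in> D} \<subseteq> snd ` D" by force
  then have fin: "finite {y. (1,y) \<in> D}"
    using finite_subset young_diagram_finite[OF D] by blast
  have one: "1 \<in> {y. (1,y) \<in> D}" using young_diagram_corner[OF D ne] by simp
  have last: "(1, first_row_len D) \<in> D"
    using Max_in[OF fin] one unfolding first_row_len_def by blast
  show "1 \<le> first_row_len D" using Max_ge[OF fin one] unfolding first_row_len_def by simp
  show "(1,y) \<in> D \<longleftrightarrow> 1 \<le> y \<and> y \<le> first_row_len D"
  proof
    assume "(1,y) \<in> D" then show "1 \<le> y \<and> y \<le> first_row_len D"
      using Max_ge[OF fin] young_diagram_pos[OF D] unfolding first_row_len_def by auto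
  next
    assume "1 \<le> y \<and> y \<le> first_row_len D" then show "(1,y) \<in> D"
      using young_diagram_down[OF D last, of 1 y] by auto
  qed
qed

lemma diag_corner_in_iff:
  assumes "young_diagram D" "D \<noteq> {}"
  shows "diag_corner d \<in> D \<longleftrightarrow> 1 - int (first_col_len D) \<le> d \<and> d \<le> int (first_row_len D) - 1"
  using first_col_len[OF assms] first_row_len[OF assms]
  by (cases "d \<ge> 0") (auto simp: diag_corner_def)

lemma first_col_end_in_rim:
  assumes "young_diagram D" "D \<noteq> {}" shows "(first_col_len D, 1) \<in> rim D"
proof -
  have "(first_col_len D + 1, 1 + 1) \<notin> D"
  proof
    assume "(first_col_len D + 1, 1 + 1) \<in> D"
    then have "(first_col_len D + 1, 1) \<in> D" by (rule young_diagram_down[OF assms(1)]) auto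
    then show False using first_col_len(2)[OF assms] by simp
  qed
  then show ?thesis using first_col_len[OF assms] by (simp add: mem_rim)
qed

lemma first_row_end_in_rim:
  assumes "young_diagram D" "D \<noteq> {}" shows "(1, first_row_len D) \<in> rim D"
proof -
  have "(1 + 1, first_row_len D + 1) \<notin> D"
  proof
    assume "(1 + 1, first_row_len D + 1) \<in> D"
    then have "(1, first_row_len D + 1) \<in> D" by (rule young_diagram_down[OF assms(1)]) auto
    then show False using first_row_len(2)[OF assms] by simp
  qed
  then show ?thesis using first_row_len[OF assms] by (simp add: mem_rim)
qed

section \<open>Peeling a rim off a height profile\<close>

text \<open>Both rules compute half of an excess.\<close>
definition excess :: "(int \<Rightarrow> int) \<Rightarrow> int \<Rightarrow> int" where
  "excess g q = g (-q) + g q - 2 * Min (g ` {-q..q})"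

definition hook_count :: "int \<Rightarrow> int \<Rightarrow> int \<Rightarrow> int \<Rightarrow> int" where
  "hook_count k i j v =
     (if v = k then 1 else 0) + (if k < v \<and> v \<le> i then 1 else 0) + (if k < v \<and> v \<le> j then 1 else 0)"

lemma count_hook_multiset:
  "int (count ({#k#} + mset_set {k+1..i} + mset_set {k+1..j}) v) = hook_count k i j v"
  by (simp add: hook_count_def count_mset_set)

lemma Min_image_le: "finite S \<Longrightarrow> d \<in> S \<Longrightarrow> Min (g ` S) \<le> g d"
  by simp

lemma Min_image_attained:
  assumes "finite S" "S \<noteq> {}" shows "\<exists>e\<in>S. g e = Min (g ` S)"
proof -
  have "Min (g ` S) \<in> g ` S" using assms by simp
  then show ?thesis by force
qed

lemma Min_raise:
  fixes g g' :: "'a \<Rightarrow> int"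
  assumes S: "finite S" "S \<noteq> {}" and c: "0 \<le> c"
    and raised: "\<And>d. d \<in> S \<Longrightarrow> d \<in> T \<Longrightarrow> g' d = g d + c"
    and kept: "\<And>d. d \<in> S \<Longrightarrow> d \<notin> T \<Longrightarrow> g' d = g d \<and> Min (g ` S) + c \<le> g d"
  shows "Min (g' ` S) = Min (g ` S) + c"
proof (rule Min_eqI)
  show "finite (g' ` S)" using S by simp
  show "Min (g ` S) + c \<le> y" if "y \<in> g' ` S" for y
    using that raised kept Min_image_le[OF S(1), of _ g] by fastforce
  obtain e where e: "e \<in> S" "g e = Min (g ` S)" using Min_image_attained[OF S] by blast
  have "g' e = Min (g ` S) + c"
    using raised[OF e(1)] kept[OF e(1)] e(2) c by (cases "e \<in> T") auto
  then show "Min (g ` S) + c \<in> g' ` S" using e(1) by force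
qed

lemma Min_tent_window:
  fixes g :: "int \<Rightarrow> int"
  assumes "-q < d1" "d1 \<le> d2" "d2 < q"
    and tent: "\<And>d. d < d1 \<or> d2 < d \<Longrightarrow> g d = n - \<bar>d\<bar>"
  shows "Min (g ` {-q..q}) = min (n - q) (Min (g ` {d1..d2}))"
proof (rule Min_eqI)
  show "finite (g ` {-q..q})" by simp
  show "min (n - q) (Min (g ` {d1..d2})) \<le> y" if y: "y \<in> g ` {-q..q}" for y
  proof -
    obtain d where d: "d \<in> {-q..q}" "y = g d" using y by blast
    show ?thesis
    proof (cases "d1 \<le> d \<and> d \<le> d2")
      case True
      then have "Min (g ` {d1..d2}) \<le> g d" by (intro Min_image_le) auto
      then show ?thesis using d by linarith
    next
      case False then show ?thesis using d tent[of d] by auto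
    qed
  qed
  obtain e where e: "e \<in> {d1..d2}" "g e = Min (g ` {d1..d2})"
    using Min_image_attained[of "{d1..d2}" g] assms(2) by auto
  have "g q = n - q" "q \<in> {-q..q}" using tent[of q] assms by auto
  then have "n - q \<in> g ` {-q..q}" by (metis rev_image_eqI)
  moreover have "e \<in> {-q..q}" using e assms by auto
  then have "Min (g ` {d1..d2}) \<in> g ` {-q..q}" using e(2) by (metis rev_image_eqI)
  ultimately show "min (n - q) (Min (g ` {d1..d2})) \<in> g ` {-q..q}"
    by (simp add: min_def)
qed

text \<open>The situation created by peeling one rim off a Young diagram: the rim meets
  exactly the diagonals with content in \<open>[d1,d2] \<ni> 0\<close>.  The lowest rim label is \<open>k\<close>, the labels of its two
  ends are \<open>n + d1 - 1\<close> and \<open>n - d2 - 1\<close>.\<close>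
context
  fixes h h' :: "int \<Rightarrow> int" and n q d1 d2 k :: int
  assumes window: "d1 \<le> 0" "0 \<le> d2" and q_pos: "1 \<le> q"
    and outside: "\<And>d. d < d1 \<or> d2 < d \<Longrightarrow> h d = n - \<bar>d\<bar> \<and> h' d = h d"
    and inside: "\<And>d. d1 \<le> d \<Longrightarrow> d \<le> d2 \<Longrightarrow> h d \<le> n - \<bar>d\<bar> - 2 \<and> h' d = h d + 2"
    and lowest: "k = Min (h ` {d1..d2}) + 1"
begin

lemma lowest_le: "d1 \<le> d \<Longrightarrow> d \<le> d2 \<Longrightarrow> k \<le> h d + 1"
  using lowest by simp

text \<open>Rim covering the whole window: nothing is counted and the excess is unchanged.\<close>
lemma peel_wide:
  assumes "d1 \<le> -q" "q \<le> d2"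
  shows "2 * hook_count k (n + d1 - 1) (n - d2 - 1) (n - q) + excess h' q = excess h q"
proof -
  have "Min (h' ` {-q..q}) = Min (h ` {-q..q}) + 2"
    by (rule Min_raise[where T = "{d1..d2}"]) (use assms inside window q_pos in auto)
  moreover have "k \<le> n - q - 1" using lowest_le[of q] inside[of q] assms q_pos by simp
  ultimately show ?thesis
    using inside[of q] inside[of "-q"] assms q_pos by (simp add: excess_def hook_count_def)
qed

text \<open>Rim strictly inside the window: the value \<open>n - q\<close> is counted once if it is the
  lowest label and twice if it lies above it.\<close>
lemma peel_narrow:
  assumes "-q < d1" "d2 < q"
  shows "2 * hook_count k (n + d1 - 1) (n - d2 - 1) (n - q) + excess h' q = excess h q"
proof -
  have "Min (h' ` {d1..d2}) = Min ((\<lambda>d. h d + 2) ` {d1..d2})"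
    using inside by (intro arg_cong[where f = Min] image_cong) auto
  also have "\<dots> = k + 1" using lowest window by (simp add: Min_add_commute)
  finally have "Min (h' ` {-q..q}) = min (n - q) (k + 1)"
    using Min_tent_window[of q d1 d2 h' n] assms window outside by simp
  moreover have "Min (h ` {-q..q}) = min (n - q) (k - 1)"
    using Min_tent_window[of q d1 d2 h n] assms window outside lowest by simp
  moreover have "h q = n - q" "h (-q) = n - q" "h' q = n - q" "h' (-q) = n - q"
    using outside[of q] outside[of "-q"] assms q_pos by auto
  ultimately show ?thesis using assms q_pos by (auto simp: excess_def hook_count_def min_def)
qed

text \<open>Rim leaving the window on one side: the value \<open>n - q\<close> is counted once, on the
  arm of the rim that ends inside the window.\<close>
lemma peel_left:
  assumes "d1 \<le> -q" "d2 < q"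
  shows "2 * hook_count k (n + d1 - 1) (n - d2 - 1) (n - q) + excess h' q = excess h q"
proof -
  have "Min (h ` {-q..q}) \<le> h (-q)" using q_pos by (intro Min_image_le) auto
  moreover have "h (-q) \<le> n - q - 2" using inside[of "-q"] assms window q_pos by simp
  ultimately have low: "Min (h ` {-q..q}) \<le> n - q - 2" by linarith
  have "Min (h' ` {-q..q}) = Min (h ` {-q..q}) + 2"
    by (rule Min_raise[where T = "{d1..d2}"]) (use assms inside outside low q_pos in auto)
  moreover obtain e where e: "e \<in> {-q..q}" "h e = Min (h ` {-q..q})"
    using Min_image_attained[of "{-q..q}" h] q_pos by auto
  moreover have "e \<le> d2" using e low outside[of e] by force
  ultimately have "k \<le> n - q - 1" using lowest_le[of e] assms low by simp
  then show ?thesis using \<open>Min (h' ` {-q..q}) = _\<close> inside[of "-q"] outside[of q] assms window q_pos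
    by (simp add: excess_def hook_count_def)
qed

lemma peel_right:
  assumes "-q < d1" "q \<le> d2"
  shows "2 * hook_count k (n + d1 - 1) (n - d2 - 1) (n - q) + excess h' q = excess h q"
proof -
  have "Min (h ` {-q..q}) \<le> h q" using q_pos by (intro Min_image_le) auto
  moreover have "h q \<le> n - q - 2" using inside[of q] assms window q_pos by simp
  ultimately have low: "Min (h ` {-q..q}) \<le> n - q - 2" by linarith
  have "Min (h' ` {-q..q}) = Min (h ` {-q..q}) + 2"
    by (rule Min_raise[where T = "{d1..d2}"]) (use assms inside outside low q_pos in auto)
  moreover obtain e where e: "e \<in> {-q..q}" "h e = Min (h ` {-q..q})"
    using Min_image_attained[of "{-q..q}" h] q_pos by auto
  moreover have "d1 \<le> e" using e low outside[of e] by force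
  ultimately have "k \<le> n - q - 1" using lowest_le[of e] assms low by simp
  then show ?thesis using \<open>Min (h' ` {-q..q}) = _\<close> inside[of q] outside[of "-q"] assms window q_pos
    by (simp add: excess_def hook_count_def)
qed

lemma peel_excess:
  "2 * hook_count k (n + d1 - 1) (n - d2 - 1) (n - q) + excess h' q = excess h q"
  using peel_wide peel_narrow peel_left peel_right by fastforce

end

section \<open>Rule B as a telescoping sum over the rim decomposition\<close>

lemma rim_nonempty: "young_diagram D \<Longrightarrow> D \<noteq> {} \<Longrightarrow> rim D \<noteq> {}"
  using first_col_end_in_rim by blast

lemma finite_rim: "young_diagram D \<Longrightarrow> finite (rim D)"
  using young_diagram_finite finite_subset[of "rim D" D] by (auto simp: rim_def)

lemma bottom_left_rim:
  assumes "young_diagram D" "D \<noteq> {}"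
  shows "bottom_left (rim D) = (first_col_len D, 1)"
proof -
  have end_in: "(first_col_len D, 1) \<in> rim D" using first_col_end_in_rim[OF assms] .
  have "Min (snd ` rim D) = 1"
  proof (rule Min_eqI)
    show "finite (snd ` rim D)" using finite_rim[OF assms(1)] by simp
    show "1 \<le> y" if "y \<in> snd ` rim D" for y
      using that young_diagram_pos[OF assms(1)] by (auto simp: rim_def)
    show "1 \<in> snd ` rim D" using end_in by (metis snd_conv rev_image_eqI)
  qed
  moreover have "Max {x. (x,1) \<in> rim D} = first_col_len D"
  proof (rule Max_eqI)
    have "{x. (x,1) \<in> rim D} \<subseteq> fst ` rim D" by force
    then show "finite {x. (x,1) \<in> rim D}" using finite_rim[OF assms(1)] finite_subset by blast
    show "x \<le> first_col_len D" if "x \<in> {x. (x,1) \<in> rim D}" for x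
      using that first_col_len(2)[OF assms] by (auto simp: rim_def)
    show "first_col_len D \<in> {x. (x,1) \<in> rim D}" using end_in by simp
  qed
  ultimately show ?thesis by (simp add: bottom_left_def)
qed

lemma top_right_rim:
  assumes "young_diagram D" "D \<noteq> {}"
  shows "top_right (rim D) = (1, first_row_len D)"
proof -
  have end_in: "(1, first_row_len D) \<in> rim D" using first_row_end_in_rim[OF assms] .
  have "Min (fst ` rim D) = 1"
  proof (rule Min_eqI)
    show "finite (fst ` rim D)" using finite_rim[OF assms(1)] by simp
    show "1 \<le> x" if "x \<in> fst ` rim D" for x
      using that young_diagram_pos[OF assms(1)] by (auto simp: rim_def)
    show "1 \<in> fst ` rim D" using end_in by (metis fst_conv rev_image_eqI)
  qed
  moreover have "Max {y. (1,y) \<in> rim D} = first_row_len D"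
  proof (rule Max_eqI)
    have "{y. (1,y) \<in> rim D} \<subseteq> snd ` rim D" by force
    then show "finite {y. (1,y) \<in> rim D}" using finite_rim[OF assms(1)] finite_subset by blast
    show "y \<le> first_row_len D" if "y \<in> {y. (1,y) \<in> rim D}" for y
      using that first_row_len(2)[OF assms] by (auto simp: rim_def)
    show "first_row_len D \<in> {y. (1,y) \<in> rim D}" using end_in by simp
  qed
  ultimately show ?thesis by (simp add: top_right_def)
qed

text \<open>The rim meets every nonempty diagonal exactly in its last box, so its labels
  are the height profile, shifted by one, over the range of nonempty diagonals.\<close>
lemma label_image_rim:
  assumes D: "young_diagram D" and ne: "D \<noteq> {}"
  shows "label n ` rim D =
    (\<lambda>d. height n D d + 1) ` {1 - int (first_col_len D) .. int (first_row_len D) - 1}"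
    (is "_ = _ ` ?I")
proof
  show "label n ` rim D \<subseteq> (\<lambda>d. height n D d + 1) ` ?I"
  proof
    fix l assume "l \<in> label n ` rim D"
    then obtain x y where b: "(x,y) \<in> rim D" "l = label n (x,y)" by auto
    have "(x,y) \<in> diagonal D (int y - int x)" using b(1) by (simp add: diagonal_def rim_def)
    then have "int y - int x \<in> ?I"
      using diagonal_nonempty_iff[OF D] diag_corner_in_iff[OF D ne] by auto
    then show "l \<in> (\<lambda>d. height n D d + 1) ` ?I" using b label_at_rim[OF D] by simp
  qed
  show "(\<lambda>d. height n D d + 1) ` ?I \<subseteq> label n ` rim D"
  proof
    fix l assume "l \<in> (\<lambda>d. height n D d + 1) ` ?I"
    then obtain d where d: "d \<in> ?I" "l = height n D d + 1" by auto
    have ne_d: "diagonal D d \<noteq> {}"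
      using d(1) diag_corner_in_iff[OF D ne] diagonal_nonempty_iff[OF D] by simp
    define x where "x = Max (fst ` diagonal D d)"
    have "x \<in> fst ` diagonal D d" unfolding x_def using finite_diagonal[OF D] ne_d by simp
    then obtain y where xy: "(x,y) \<in> diagonal D d" by force
    have "(x+1,y+1) \<notin> D"
    proof
      assume "(x+1,y+1) \<in> D"
      then have "x + 1 \<in> fst ` diagonal D d" using xy by (force simp: diagonal_def)
      then have "x + 1 \<le> x" unfolding x_def by (rule Max_ge[rotated]) (simp add: finite_diagonal[OF D])
      then show False by simp
    qed
    then have "(x,y) \<in> rim D" using xy by (simp add: diagonal_def rim_def)
    moreover have "l = label n (x,y)"
      using label_at_rim[OF D \<open>(x,y) \<in> rim D\<close>] xy d by (simp add: diagonal_def)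
    ultimately show "l \<in> label n ` rim D" by blast
  qed
qed

lemma count_B_rim:
  "int (count (B_rim n R) v) =
     hook_count (Min (label n ` R)) (label n (bottom_left R)) (label n (top_right R)) v"
  unfolding B_rim_def Let_def by (rule count_hook_multiset)

lemma peel_step:
  assumes D: "young_diagram D" and ne: "D \<noteq> {}" and q: "1 \<le> q"
  shows "2 * int (count (B_rim n (rim D)) (int n - q)) + excess (height n (D - rim D)) q
         = excess (height n D) q"
proof -
  define d1 where "d1 = 1 - int (first_col_len D)"
  define d2 where "d2 = int (first_row_len D) - 1"
  have corner: "diag_corner d \<in> D \<longleftrightarrow> d1 \<le> d \<and> d \<le> d2" for d
    using diag_corner_in_iff[OF D ne] by (simp add: d1_def d2_def)
  have window: "d1 \<le> 0" "0 \<le> d2"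
    using first_col_len(1)[OF D ne] first_row_len(1)[OF D ne] by (auto simp: d1_def d2_def)
  have outside: "height n D d = int n - \<bar>d\<bar> \<and> height n (D - rim D) d = height n D d"
    if "d < d1 \<or> d2 < d" for d
  proof -
    have "diag_corner d \<notin> D" using that corner[of d] by auto
    then show ?thesis using diag_size_eq_0[OF D] diag_size_peel[OF D, of d] by (simp add: height_def)
  qed
  have inside: "height n D d \<le> int n - \<bar>d\<bar> - 2 \<and> height n (D - rim D) d = height n D d + 2"
    if "d1 \<le> d" "d \<le> d2" for d
    using that corner[of d] diag_size_pos[OF D] diag_size_peel[OF D, of d]
    by (simp add: height_def)
  have "Min (label n ` rim D) = Min ((\<lambda>d. height n D d + 1) ` {d1..d2})"
    using label_image_rim[OF D ne] by (simp add: d1_def d2_def)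
  also have "\<dots> = Min (height n D ` {d1..d2}) + 1"
    using window by (simp add: Min_add_commute)
  finally have lowest: "Min (label n ` rim D) = Min (height n D ` {d1..d2}) + 1" .
  have "label n (bottom_left (rim D)) = int n + d1 - 1"
       "label n (top_right (rim D)) = int n - d2 - 1"
    using bottom_left_rim[OF D ne] top_right_rim[OF D ne] by (simp_all add: label_def d1_def d2_def)
  then show ?thesis
    using peel_excess[OF window q outside inside lowest] count_B_rim[of n "rim D"] by simp
qed

definition rim_sum :: "nat \<Rightarrow> (nat \<times> nat) set \<Rightarrow> nat \<Rightarrow> int multiset" where
  "rim_sum n D N = (\<Sum>l < N. if remaining D l = {} then {#} else B_rim n (rim (remaining D l)))"

lemma remaining_Suc: "remaining D (Suc l) = remaining (D - rim D) l"
  unfolding remaining_def by (simp only: funpow_Suc_right comp_apply)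

lemma remaining_empty: "remaining {} l = {}"
  by (induction l) (simp_all add: remaining_def)

lemma rim_sum_Suc:
  "rim_sum n D (Suc N) = (if D = {} then {#} else B_rim n (rim D)) + rim_sum n (D - rim D) N"
proof -
  have "rim_sum n D (Suc N) =
      (if remaining D 0 = {} then {#} else B_rim n (rim (remaining D 0)))
      + (\<Sum>l < N. if remaining D (Suc l) = {} then {#} else B_rim n (rim (remaining D (Suc l))))"
    unfolding rim_sum_def by (rule sum.lessThan_Suc_shift)
  then show ?thesis unfolding rim_sum_def remaining_Suc by (simp add: remaining_def)
qed

text \<open>The empty diagram has the tent \<open>n - |d|\<close> as profile, which has no excess.\<close>
lemma excess_empty:
  assumes "1 \<le> q" shows "excess (height n {}) q = 0"
proof -
  have "Min (height n {} ` {-q..q}) = int n - q"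
  proof (rule Min_eqI)
    show "int n - q \<in> height n {} ` {-q..q}"
      using assms by (intro rev_image_eqI[of q]) (auto simp: height_def diag_size_def diagonal_def)
    show "int n - q \<le> y" if "y \<in> height n {} ` {-q..q}" for y
      using that by (auto simp: height_def diag_size_def diagonal_def)
  qed simp
  then show ?thesis using assms by (simp add: excess_def height_def diag_size_def diagonal_def)
qed

lemma rim_sum_count:
  assumes q: "1 \<le> q"
  shows "young_diagram D \<Longrightarrow> card D \<le> N \<Longrightarrow>
           2 * int (count (rim_sum n D N) (int n - q)) = excess (height n D) q"
proof (induction N arbitrary: D)
  case 0
  then have "D = {}" using young_diagram_finite by auto
  then show ?case using excess_empty[OF q] by (simp add: rim_sum_def)
next
  case (Suc N)
  show ?case
  proof (cases "D = {}")
    case True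
    then show ?thesis using excess_empty[OF q] by (simp add: rim_sum_def remaining_empty)
  next
    case False
    have "card (D - rim D) < card D"
      using rim_nonempty[OF Suc.prems(1) False] young_diagram_finite[OF Suc.prems(1)]
      by (intro psubset_card_mono) (auto simp: rim_def)
    then have "2 * int (count (rim_sum n (D - rim D) N) (int n - q)) = excess (height n (D - rim D)) q"
      using Suc young_diagram_peel by simp
    then show ?thesis using peel_step[OF Suc.prems(1) False q, of n] False by (simp add: rim_sum_Suc)
  qed
qed

section \<open>Noncrossing matchings and their Young diagrams\<close>

lemma matching_arch:
  assumes "noncrossing_matching n M" "(i,j) \<in> M" shows "i < j \<and> 1 \<le> i \<and> j \<le> 2*n"
  using assms unfolding noncrossing_matching_def by blast

lemma matching_noncrossing:
  assumes "noncrossing_matching n M" "(i,j) \<in> M" "(k,l) \<in> M" shows "\<not> (i < k \<and> k < j \<and> j < l)"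
  using assms unfolding noncrossing_matching_def by blast

lemma matching_unique_arch:
  assumes M: "noncrossing_matching n M" and a: "a \<in> M" and b: "b \<in> M"
    and "fst a = x \<or> snd a = x" and "fst b = x \<or> snd b = x"
  shows "a = b"
proof -
  have "x \<in> {1..2*n}" using matching_arch[OF M, of "fst a" "snd a"] a assms(4) by auto
  then have "\<exists>!a. a \<in> M \<and> (fst a = x \<or> snd a = x)"
    using M unfolding noncrossing_matching_def by (elim conjE) blast
  then show ?thesis using a b assms(4,5) by (elim ex1E) blast
qed

lemma matching_finite:
  assumes M: "noncrossing_matching n M" shows "finite M"
proof (rule finite_subset)
  show "M \<subseteq> {1..2*n} \<times> {1..2*n}"
  proof
    fix a assume "a \<in> M"
    then show "a \<in> {1..2*n} \<times> {1..2*n}" using matching_arch[OF M, of "fst a" "snd a"] by (cases a) auto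
  qed
qed simp

lemma matching_inj_fst: "noncrossing_matching n M \<Longrightarrow> inj_on fst M"
  unfolding inj_on_def using matching_unique_arch by blast

lemma matching_inj_snd: "noncrossing_matching n M \<Longrightarrow> inj_on snd M"
  unfolding inj_on_def using matching_unique_arch by blast

lemma openers_closers_disjoint:
  assumes M: "noncrossing_matching n M" shows "fst ` M \<inter> snd ` M = {}"
proof (rule ccontr)
  assume "fst ` M \<inter> snd ` M \<noteq> {}"
  then obtain a b where ab: "a \<in> M" "b \<in> M" "fst a = snd b" by auto
  then have "a = b" using matching_unique_arch[OF M, of a b "fst a"] by auto
  then show False using matching_arch[OF M, of "fst b" "snd b"] ab by auto
qed

lemma openers_closers_union:
  assumes M: "noncrossing_matching n M" shows "fst ` M \<union> snd ` M = {1..2*n}"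
proof
  show "fst ` M \<union> snd ` M \<subseteq> {1..2*n}"
  proof
    fix x assume "x \<in> fst ` M \<union> snd ` M"
    then obtain a where "a \<in> M" "x = fst a \<or> x = snd a" by blast
    then show "x \<in> {1..2*n}" using matching_arch[OF M, of "fst a" "snd a"] by auto
  qed
  show "{1..2*n} \<subseteq> fst ` M \<union> snd ` M"
  proof
    fix x assume "x \<in> {1..2*n}"
    then obtain a where "a \<in> M" "fst a = x \<or> snd a = x"
      using M unfolding noncrossing_matching_def by (elim conjE) blast
    then show "x \<in> fst ` M \<union> snd ` M" by auto
  qed
qed

lemma card_openers:
  assumes M: "noncrossing_matching n M" shows "card (fst ` M) = n"
proof -
  have "card (fst ` M) = card M" "card (snd ` M) = card M"
    using card_image matching_inj_fst[OF M] matching_inj_snd[OF M] by auto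
  moreover have "card (fst ` M \<union> snd ` M) = card (fst ` M) + card (snd ` M)"
    using card_Un_disjoint openers_closers_disjoint[OF M] matching_finite[OF M] by blast
  ultimately show ?thesis using openers_closers_union[OF M] by simp
qed

lemma opener_list:
  assumes M: "noncrossing_matching n M"
  shows "length (sorted_list_of_set (fst ` M)) = n" "set (sorted_list_of_set (fst ` M)) = fst ` M"
    and "sorted_wrt (<) (sorted_list_of_set (fst ` M))"
  using card_openers[OF M] matching_finite[OF M] by (auto simp: strict_sorted_list_of_set)

lemma opener_mem:
  assumes M: "noncrossing_matching n M" and "1 \<le> i" "i \<le> n" shows "opener M i \<in> fst ` M"
  using opener_list[OF M] assms(2,3) nth_mem[of "i-1" "sorted_list_of_set (fst ` M)"]
  by (auto simp: opener_def)

lemma opener_less: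
  assumes M: "noncrossing_matching n M" and "1 \<le> i" "i < j" "j \<le> n"
  shows "opener M i < opener M j"
  using opener_list[OF M] assms(2-4)
    sorted_wrt_nth_less[of "(<)" "sorted_list_of_set (fst ` M)" "i-1" "j-1"]
  by (auto simp: opener_def)

lemma opener_bounds:
  assumes M: "noncrossing_matching n M" and "1 \<le> i" "i \<le> n"
  shows "1 \<le> opener M i \<and> opener M i \<le> 2*n"
proof -
  obtain a where "a \<in> M" "opener M i = fst a" using opener_mem[OF assms] by blast
  then show ?thesis using matching_arch[OF M, of "fst a" "snd a"] by simp
qed

text \<open>Consecutive openers are at least one apart, so \<open>a\<^sub>j - a\<^sub>i \<ge> j - i\<close>.\<close>
lemma opener_gap:
  assumes M: "noncrossing_matching n M"
  shows "1 \<le> i \<Longrightarrow> i \<le> j \<Longrightarrow> j \<le> n \<Longrightarrow> opener M i + (j - i) \<le> opener M j"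
proof (induction j)
  case (Suc j)
  show ?case
  proof (cases "i = Suc j")
    case False
    then have "opener M i + (j - i) \<le> opener M j" using Suc by simp
    moreover have "opener M j < opener M (Suc j)" using opener_less[OF M, of j "Suc j"] Suc False by simp
    ultimately show ?thesis using Suc False by simp
  qed simp
qed simp

lemma opener_ge:
  assumes M: "noncrossing_matching n M" and "1 \<le> i" "i \<le> n" shows "i \<le> opener M i"
proof -
  have "opener M 1 + (i - 1) \<le> opener M i" using opener_gap[OF M, of 1 i] assms by simp
  moreover have "1 \<le> opener M 1" using opener_bounds[OF M, of 1] assms by simp
  ultimately show ?thesis by linarith
qed

lemma opener_bij:
  assumes M: "noncrossing_matching n M" shows "bij_betw (opener M) {1..n} (fst ` M)"
proof (rule bij_betw_imageI)
  show "inj_on (opener M) {1..n}"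
  proof (rule inj_onI)
    fix i j assume "i \<in> {1..n}" "j \<in> {1..n}" "opener M i = opener M j"
    then show "i = j"
      using opener_less[OF M, of i j] opener_less[OF M, of j i] by (cases i j rule: linorder_cases) auto
  qed
  show "opener M ` {1..n} = fst ` M"
  proof
    show "opener M ` {1..n} \<subseteq> fst ` M" using opener_mem[OF M] by auto
    show "fst ` M \<subseteq> opener M ` {1..n}"
    proof
      fix x assume "x \<in> fst ` M"
      then obtain k where "k < n" "x = sorted_list_of_set (fst ` M) ! k"
        using opener_list[OF M] by (metis in_set_conv_nth)
      then have "x = opener M (k+1)" "k + 1 \<in> {1..n}" by (simp_all add: opener_def)
      then show "x \<in> opener M ` {1..n}" by blast
    qed
  qed
qed

lemma card_openers_with:
  assumes M: "noncrossing_matching n M"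
  shows "card {i\<in>{1..n}. P (opener M i)} = card {a\<in>M. P (fst a)}"
proof -
  have bij: "bij_betw (opener M) {1..n} (fst ` M)" by (rule opener_bij[OF M])
  have "opener M ` {i\<in>{1..n}. P (opener M i)} = {x\<in>fst ` M. P x}"
    unfolding bij_betw_imp_surj_on[OF bij, symmetric] by auto
  moreover have "inj_on (opener M) {i\<in>{1..n}. P (opener M i)}"
    by (rule inj_on_subset[OF bij_betw_imp_inj_on[OF bij]]) auto
  ultimately have "card {i\<in>{1..n}. P (opener M i)} = card {x\<in>fst ` M. P x}"
    using card_image[of "opener M" "{i\<in>{1..n}. P (opener M i)}"] by simp
  also have "{x\<in>fst ` M. P x} = fst ` {a\<in>M. P (fst a)}" by auto
  also have "card \<dots> = card {a\<in>M. P (fst a)}"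
    by (rule card_image, rule inj_on_subset[OF matching_inj_fst[OF M]]) auto
  finally show ?thesis .
qed

lemma young_mem:
  "(x,y) \<in> young n M \<longleftrightarrow> 1 \<le> x \<and> x \<le> n \<and> 1 \<le> y \<and> y \<le> opener M (n + 1 - x) - (n + 1 - x)"
  by (simp add: young_def)

lemma young_diagram_young:
  assumes M: "noncrossing_matching n M" shows "young_diagram (young n M)"
proof (rule young_diagramI)
  have "young n M \<subseteq> {1..n} \<times> {0..2*n}"
  proof
    fix b assume "b \<in> young n M"
    then have "1 \<le> fst b" "fst b \<le> n" "snd b \<le> opener M (n + 1 - fst b) - (n + 1 - fst b)"
      using young_mem[of "fst b" "snd b"] by auto
    moreover have "opener M (n + 1 - fst b) \<le> 2*n"
      using opener_bounds[OF M, of "n + 1 - fst b"] \<open>1 \<le> fst b\<close> \<open>fst b \<le> n\<close> by simp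
    ultimately show "b \<in> {1..n} \<times> {0..2*n}" by (cases b) auto
  qed
  then show "finite (young n M)" using finite_subset by blast
  show "\<And>x y. (x,y) \<in> young n M \<Longrightarrow> 1 \<le> x \<and> 1 \<le> y" using young_mem by blast
  fix x y x' y' assume h: "(x,y) \<in> young n M" "1 \<le> x'" "x' \<le> x" "1 \<le> y'" "y' \<le> y"
  then have row: "1 \<le> x" "x \<le> n" "y \<le> opener M (n + 1 - x) - (n + 1 - x)" using young_mem by auto
  have "opener M (n+1-x) + ((n+1-x') - (n+1-x)) \<le> opener M (n+1-x')"
    using opener_gap[OF M, of "n+1-x" "n+1-x'"] h row by simp
  then have "y' \<le> opener M (n + 1 - x') - (n + 1 - x')" using h row by linarith
  then show "(x',y') \<in> young n M" using young_mem h row by auto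
qed

text \<open>Row \<open>n + 1 - i\<close> of the diagram meets the diagonal of content \<open>t - n\<close> iff
  \<open>i \<le> t < a\<^sub>i\<close>, i.e.\ iff the \<open>i\<close>-th opener is still to the right of position \<open>t\<close>
  although \<open>i \<le> t\<close>.\<close>
lemma diag_size_young:
  assumes M: "noncrossing_matching n M"
  shows "diag_size (young n M) (int t - int n) = card {i\<in>{1..n}. i \<le> t \<and> t < opener M i}"
proof -
  let ?row = "\<lambda>b::nat \<times> nat. n + 1 - fst b"
  have "inj_on ?row (diagonal (young n M) (int t - int n))"
    by (rule inj_onI) (auto simp: diagonal_def young_mem)
  moreover have "?row ` diagonal (young n M) (int t - int n) = {i\<in>{1..n}. i \<le> t \<and> t < opener M i}"
  proof
    show "?row ` diagonal (young n M) (int t - int n) \<subseteq> {i\<in>{1..n}. i \<le> t \<and> t < opener M i}"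
      using opener_ge[OF M] by (force simp: diagonal_def young_mem)
    show "{i\<in>{1..n}. i \<le> t \<and> t < opener M i} \<subseteq> ?row ` diagonal (young n M) (int t - int n)"
    proof
      fix i assume i: "i \<in> {i\<in>{1..n}. i \<le> t \<and> t < opener M i}"
      then have "(n + 1 - i, t + 1 - i) \<in> diagonal (young n M) (int t - int n)"
        using opener_ge[OF M, of i] by (auto simp: diagonal_def young_mem)
      moreover have "i = ?row (n + 1 - i, t + 1 - i)" using i by auto
      ultimately show "i \<in> ?row ` diagonal (young n M) (int t - int n)" by blast
    qed
  qed
  ultimately show ?thesis unfolding diag_size_def by (metis card_image)
qed

text \<open>The number of arches passing over the gap right after position \<open>t\<close>: the height
  of the Dyck path of the matching after \<open>t\<close> steps.\<close>
definition arches_over :: "(nat \<times> nat) set \<Rightarrow> nat \<Rightarrow> nat" where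
  "arches_over M t = card {a\<in>M. fst a \<le> t \<and> t < snd a}"

text \<open>Among the positions \<open>1..t\<close>, the openers of the arches over \<open>t\<close> are unmatched.\<close>
lemma arches_over_openers:
  assumes M: "noncrossing_matching n M" and t: "t \<le> 2*n"
  shows "int (arches_over M t) = 2 * int (card {a\<in>M. fst a \<le> t}) - int t"
proof -
  have fin: "finite M" using matching_finite[OF M] .
  have lt: "fst a < snd a" if "a \<in> M" for a using matching_arch[OF M, of "fst a" "snd a"] that by simp
  have "{a\<in>M. fst a \<le> t} = {a\<in>M. fst a \<le> t \<and> t < snd a} \<union> {a\<in>M. snd a \<le> t}"
    using lt by force
  then have opened: "card {a\<in>M. fst a \<le> t} = arches_over M t + card {a\<in>M. snd a \<le> t}"
    unfolding arches_over_def using fin by (simp add: card_Un_disjoint disjoint_iff)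
  have "card (fst ` {a\<in>M. fst a \<le> t}) + card (snd ` {a\<in>M. snd a \<le> t}) = card {1..t}"
  proof -
    have "fst ` {a\<in>M. fst a \<le> t} \<union> snd ` {a\<in>M. snd a \<le> t} = {x \<in> fst ` M \<union> snd ` M. x \<le> t}"
      by auto
    also have "\<dots> = {1..t}" using openers_closers_union[OF M] t by auto
    moreover have "fst ` {a\<in>M. fst a \<le> t} \<inter> snd ` {a\<in>M. snd a \<le> t} = {}"
      using openers_closers_disjoint[OF M] by blast
    ultimately show ?thesis using fin card_Un_disjoint[of "fst ` {a\<in>M. fst a \<le> t}"
          "snd ` {a\<in>M. snd a \<le> t}"] by simp
  qed
  moreover have "card (fst ` {a\<in>M. fst a \<le> t}) = card {a\<in>M. fst a \<le> t}"
    by (rule card_image, rule inj_on_subset[OF matching_inj_fst[OF M]]) auto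
  moreover have "card (snd ` {a\<in>M. snd a \<le> t}) = card {a\<in>M. snd a \<le> t}"
    by (rule card_image, rule inj_on_subset[OF matching_inj_snd[OF M]]) auto
  ultimately show ?thesis using opened by simp
qed

lemma height_young:
  assumes M: "noncrossing_matching n M" and t: "t \<le> 2*n"
  shows "height n (young n M) (int t - int n) = int (arches_over M t)"
proof -
  have "{i\<in>{1..n}. i \<le> t} = {i\<in>{1..n}. i \<le> t \<and> t < opener M i} \<union> {i\<in>{1..n}. opener M i \<le> t}"
    using opener_ge[OF M] by force
  then have "card {i\<in>{1..n}. i \<le> t}
      = diag_size (young n M) (int t - int n) + card {a\<in>M. fst a \<le> t}"
    unfolding diag_size_young[OF M] card_openers_with[OF M, of "\<lambda>x. x \<le> t", symmetric]
    by (simp add: card_Un_disjoint disjoint_iff)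
  moreover have "{i\<in>{1..n}. i \<le> t} = {1..min n t}" by auto
  ultimately show ?thesis
    using arches_over_openers[OF M t] by (simp add: height_def min_def split: if_splits)
qed

section \<open>Rule A as an excess, and the main theorem\<close>

definition arcs_enclosing :: "nat \<Rightarrow> (nat \<times> nat) set \<Rightarrow> nat \<Rightarrow> (nat \<times> nat) set" where
  "arcs_enclosing n M p = {(a1,a2)\<in>M. a1 \<le> p \<and> hat n p \<le> a2}"

lemma finite_arcs:
  assumes M: "noncrossing_matching n M"
  shows "finite (arcsL n M p)" "finite (arcsR n M p)" "finite (arcs_enclosing n M p)"
proof -
  have "arcsL n M p \<subseteq> M" "arcsR n M p \<subseteq> M" "arcs_enclosing n M p \<subseteq> M"
    by (auto simp: arcsL_def arcsR_def arcs_enclosing_def)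
  then show "finite (arcsL n M p)" "finite (arcsR n M p)" "finite (arcs_enclosing n M p)"
    using finite_subset matching_finite[OF M] by blast+
qed

lemma arches_over_window_ends:
  assumes M: "noncrossing_matching n M" and p: "p \<le> n"
  shows "arches_over M p = card (arcsL n M p) + card (arcs_enclosing n M p)"
    and "arches_over M (2*n - p) = card (arcsR n M p) + card (arcs_enclosing n M p)"
proof -
  note fin = finite_arcs[OF M, of p]
  have "{a\<in>M. fst a \<le> p \<and> p < snd a} = arcsL n M p \<union> arcs_enclosing n M p"
    using p by (auto simp: arcsL_def arcs_enclosing_def hat_def)
  then show "arches_over M p = card (arcsL n M p) + card (arcs_enclosing n M p)"
    unfolding arches_over_def using fin
    by (simp add: card_Un_disjoint disjoint_iff arcsL_def arcs_enclosing_def)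
  have "{a\<in>M. fst a \<le> 2*n - p \<and> 2*n - p < snd a} = arcsR n M p \<union> arcs_enclosing n M p"
    using p by (auto simp: arcsR_def arcs_enclosing_def hat_def)
  then show "arches_over M (2*n - p) = card (arcsR n M p) + card (arcs_enclosing n M p)"
    unfolding arches_over_def using fin
    by (simp add: card_Un_disjoint disjoint_iff arcsR_def arcs_enclosing_def)
qed

lemma enclosing_le_arches_over:
  assumes M: "noncrossing_matching n M" and "p \<le> t" "t \<le> 2*n - p"
  shows "card (arcs_enclosing n M p) \<le> arches_over M t"
  unfolding arches_over_def using assms matching_finite[OF M]
  by (intro card_mono) (auto simp: arcs_enclosing_def hat_def)

text \<open>Inside the window the Dyck path comes down to the enclosing arches: right after
  the last closer \<open>t\<^sub>0\<close> of an arch counted in \<open>arcsL\<close>, every arch passing over \<open>t\<^sub>0\<close> would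
  otherwise cross that arch or contradict the maximality of \<open>t\<^sub>0\<close>.\<close>
lemma enclosing_attained:
  assumes M: "noncrossing_matching n M" and p: "p \<le> n"
  shows "\<exists>t\<in>{p..2*n - p}. arches_over M t = card (arcs_enclosing n M p)"
proof (cases "arcsL n M p = {}")
  case True
  then show ?thesis using arches_over_window_ends(1)[OF M p] p by force
next
  case False
  note finL = finite_arcs(1)[OF M, of p]
  define t0 where "t0 = Max (snd ` arcsL n M p)"
  have "t0 \<in> snd ` arcsL n M p" unfolding t0_def using finL False by simp
  then obtain i0 where "(i0, t0) \<in> arcsL n M p" by force
  then have a0: "(i0, t0) \<in> M" "i0 \<le> p" "p < t0" "t0 < hat n p" by (auto simp: arcsL_def)
  have "{a\<in>M. fst a \<le> t0 \<and> t0 < snd a} \<subseteq> arcs_enclosing n M p"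
  proof
    fix b assume b: "b \<in> {a\<in>M. fst a \<le> t0 \<and> t0 < snd a}"
    then have bM: "(fst b, snd b) \<in> M" "fst b \<le> t0" "t0 < snd b" by auto
    have "fst b \<noteq> t0" using openers_closers_disjoint[OF M] a0(1) bM(1) by force
    then have "fst b \<le> p" using matching_noncrossing[OF M a0(1) bM(1)] bM a0 by linarith
    moreover have "hat n p \<le> snd b"
    proof (rule ccontr)
      assume "\<not> hat n p \<le> snd b"
      then have "b \<in> arcsL n M p" using bM \<open>fst b \<le> p\<close> a0 by (auto simp: arcsL_def)
      then have "snd b \<le> t0" unfolding t0_def using finL by simp
      then show False using bM by simp
    qed
    ultimately show "b \<in> arcs_enclosing n M p" using bM by (auto simp: arcs_enclosing_def)
  qed
  then have "arches_over M t0 \<le> card (arcs_enclosing n M p)"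
    unfolding arches_over_def by (rule card_mono[OF finite_arcs(3)[OF M]])
  moreover have "t0 \<in> {p..2*n - p}" using a0 by (auto simp: hat_def)
  ultimately show ?thesis using enclosing_le_arches_over[OF M] by (force intro: antisym)
qed

lemma excess_young:
  assumes M: "noncrossing_matching n M" and p: "p \<le> n"
  shows "excess (height n (young n M)) (int n - int p) = int (card (arcsL n M p)) + int (card (arcsR n M p))"
proof -
  let ?h = "height n (young n M)" and ?C = "card (arcs_enclosing n M p)"
  have window: "{- (int n - int p) .. int n - int p} = (\<lambda>t. int t - int n) ` {p..2*n - p}"
  proof -
    have "d = int (nat (d + int n)) - int n \<and> nat (d + int n) \<in> {p..2*n - p}"
      if "d \<in> {- (int n - int p) .. int n - int p}" for d
      using that p by auto
    then show ?thesis using p by (force intro: rev_image_eqI)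
  qed
  have "?h ` {- (int n - int p) .. int n - int p} = (\<lambda>t. int (arches_over M t)) ` {p..2*n - p}"
    unfolding window image_image using p by (intro image_cong) (auto simp: height_young[OF M])
  moreover have "Min ((\<lambda>t. int (arches_over M t)) ` {p..2*n - p}) = int ?C"
    using enclosing_le_arches_over[OF M] enclosing_attained[OF M p]
    by (intro Min_eqI) (auto intro: rev_image_eqI)
  moreover have "?h (- (int n - int p)) = int (arches_over M p)"
    using height_young[OF M, of p] p by simp
  moreover have "?h (int n - int p) = int (arches_over M (2*n - p))"
    using height_young[OF M, of "2*n - p"] p by (simp add: of_nat_diff)
  ultimately show ?thesis using arches_over_window_ends[OF M p] by (simp add: excess_def)
qed

theorem theorem3p2:
  fixes n p :: nat and M :: "(nat \<times> nat) set"
  assumes "noncrossing_matching n M" and "1 \<le> p" and "p \<le> n - 1"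
  shows "mA n M p = mB n M p"
proof -
  define q where "q = int n - int p"
  have q: "1 \<le> q" using assms(2,3) by (simp add: q_def)
  have "2 * int (mB n M p) = 2 * int (count (rim_sum n (young n M) (card (young n M))) (int n - q))"
    by (simp add: mB_def B_pi_def rim_sum_def q_def)
  also have "\<dots> = excess (height n (young n M)) q"
    using rim_sum_count[OF q young_diagram_young[OF assms(1)]] by simp
  also have "\<dots> = int (card (arcsL n M p)) + int (card (arcsR n M p))"
    unfolding q_def using excess_young[OF assms(1)] assms(3) by simp
  finally show ?thesis by (simp add: mA_def)
qed

end
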